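(* Let $\mathcal{G}=(\mathcal{V},\mathcal{E})$ be a graph with $V=|\mathcal{V}|$ vertices and $E=|\mathcal{E}|$ edges, and let $\epsilon>0$ and $\gamma\in(0,1)$. Consider the algorithm which, on input $w:\mathcal{E}\to\mathbb{R}^+$, samples independently for each edge $e$ a random variable $X_e\sim\mathrm{Lap}(1/\epsilon)$, sets $w'(e)=w(e)+X_e+(1/\epsilon)\ln(E/\gamma)$, and for each pair of vertices $x,y$ releases a minimum-weight path from $x$ to $y$ in $(\mathcal{G},w')$. With probability at least $1-\gamma$, for every pair of vertices $s,t$ (joined by some path) the released path $P$ satisfies $w(P)-d_w(s,t)\le(2V/\epsilon)\ln(E/\gamma)$.
   Context: $\mathrm{Lap}(b)$ is the Laplace distribution with density $\frac{1}{2b}e^{-|x|/b}$. The weight $w(P)$ of a path is the sum of the weights of its edges, and $d_w(s,t)$ is the minimum weight of a path from $s$ to $t$; $w(P)-d_w(s,t)$ is the approximation error of the path. *)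

theory Defs
  imports "HOL-Probability.Probability"
begin

definition lap_density :: "real \<Rightarrow> real \<Rightarrow> real" where
  "lap_density b x = exp (- \<bar>x\<bar> / b) / (2 * b)"

definition Lap :: "real \<Rightarrow> real measure" where
  "Lap b = density lborel (\<lambda>x. ennreal (lap_density b x))"

definition graph :: "'v set \<Rightarrow> 'v set set \<Rightarrow> bool" where
  "graph Vs Es \<longleftrightarrow> finite Vs \<and> (\<forall>e\<in>Es. \<exists>u v. u \<noteq> v \<and> u \<in> Vs \<and> v \<in> Vs \<and> e = {u, v})"

definition paths :: "'v set \<Rightarrow> 'v set set \<Rightarrow> 'v \<Rightarrow> 'v \<Rightarrow> 'v list set" where
  "paths Vs Es s t = {p. p \<noteq> [] \<and> hd p = s \<and> last p = t \<and> distinct p \<and> set p \<subseteq> Vs \<and>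
      (\<forall>i. i + 1 < length p \<longrightarrow> {p ! i, p ! (i + 1)} \<in> Es)}"

definition path_weight :: "('v set \<Rightarrow> real) \<Rightarrow> 'v list \<Rightarrow> real" where
  "path_weight w p = (\<Sum>i<length p - 1. w {p ! i, p ! (i + 1)})"

definition dist_w :: "'v set \<Rightarrow> 'v set set \<Rightarrow> ('v set \<Rightarrow> real) \<Rightarrow> 'v \<Rightarrow> 'v \<Rightarrow> real" where
  "dist_w Vs Es w s t = Min (path_weight w ` paths Vs Es s t)"

definition is_min_path :: "'v set \<Rightarrow> 'v set set \<Rightarrow> ('v set \<Rightarrow> real) \<Rightarrow> 'v \<Rightarrow> 'v \<Rightarrow> 'v list \<Rightarrow> bool" where
  "is_min_path Vs Es w s t P \<longleftrightarrow> P \<in> paths Vs Es s t \<and>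
     (\<forall>Q\<in>paths Vs Es s t. path_weight w P \<le> path_weight w Q)"

end

theory Submission
  imports Defs
begin

text \<open>With probability at least \<open>1 - \<gamma>\<close> every noise satisfies \<open>|X e| \<le> c\<close> for
  \<open>c = ln (E / \<gamma>) / \<epsilon>\<close>: a single \<open>Lap (1/\<epsilon>)\<close> variable exceeds \<open>c\<close> in absolute value
  with probability \<open>exp (- c \<epsilon>) = \<gamma> / E\<close>, and a union bound over the \<open>E\<close> edges applies.
  On that event the released weights \<open>w' = w + X + c\<close> satisfy \<open>w \<le> w' \<le> w + 2 c\<close> on every
  edge, so for the released path \<open>P\<close> and a \<open>w\<close>-shortest path \<open>Q\<close> we get
  \<open>w P \<le> w' P \<le> w' Q \<le> w Q + 2 c V\<close>, a path having fewer than \<open>V\<close> edges.\<close>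

lemma space_Lap [simp]: "space (Lap b) = UNIV"
  and sets_Lap [simp]: "sets (Lap b) = sets borel"
  by (simp_all add: Lap_def)

lemma borel_measurable_lap_density [measurable]: "lap_density b \<in> borel_measurable borel"
  unfolding lap_density_def by measurable

lemma emeasure_Lap: "A \<in> sets borel \<Longrightarrow> emeasure (Lap b) A = (\<integral>\<^sup>+x\<in>A. lap_density b x \<partial>lborel)"
  by (simp add: Lap_def emeasure_density)

lemma emeasure_Lap_uminus:
  assumes [measurable]: "A \<in> sets borel"
  shows "emeasure (Lap b) (uminus ` A) = emeasure (Lap b) A"
proof -
  have reflect: "uminus ` A = uminus -` A"
    by (auto simp: image_iff) (metis minus_minus)
  have [measurable]: "uminus -` A \<in> sets borel"
    by (rule measurable_sets_borel[OF _ assms]) simp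
  have "(\<integral>\<^sup>+x\<in>uminus ` A. lap_density b x \<partial>lborel)
      = (\<integral>\<^sup>+x. ennreal (lap_density b (-x)) * indicator (uminus ` A) (-x) \<partial>lborel)"
    unfolding reflect using nn_integral_real_affine[of "\<lambda>x. ennreal (lap_density b x) * indicator (uminus -` A) x" "-1" 0]
    by simp
  also have "\<dots> = (\<integral>\<^sup>+x\<in>A. lap_density b x \<partial>lborel)"
    by (simp add: reflect lap_density_def indicator_def)
  finally show ?thesis
    unfolding reflect by (simp add: emeasure_Lap)
qed

lemma tendsto_exp_neg_div_at_top:
  fixes b :: real
  assumes "b > 0"
  shows "((\<lambda>x. exp (- x / b)) \<longlongrightarrow> 0) at_top"
proof -
  have "filterlim (\<lambda>x. 1 / b * x) at_top at_top"
    using assms by (intro filterlim_tendsto_pos_mult_at_top[OF tendsto_const _ filterlim_ident]) auto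
  then have "filterlim (\<lambda>x. - x / b) at_bot at_top"
    by (simp add: filterlim_uminus_at_bot)
  then show ?thesis
    by (rule filterlim_compose[OF exp_at_bot])
qed

lemma emeasure_Lap_greaterThan:
  assumes b: "b > 0" and a: "a \<ge> 0"
  shows "emeasure (Lap b) {a<..} = ennreal (exp (- a / b) / 2)"
proof -
  let ?f = "\<lambda>x. exp (- x / b) / (2 * b)"
  have "emeasure (Lap b) {a<..} = (\<integral>\<^sup>+x. ennreal (?f x) * indicator {a..} x \<partial>lborel)"
    unfolding emeasure_Lap[OF borel_open[OF open_greaterThan]]
    by (intro nn_integral_cong_AE, use AE_lborel_singleton[of a] in eventually_elim)
       (use a in \<open>auto simp: lap_density_def split: split_indicator\<close>)
  also have "\<dots> = 0 - (- exp (- a / b) / 2)"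
  proof (rule nn_integral_FTC_atLeast)
    show "((\<lambda>x. - exp (- x / b) / 2) has_real_derivative ?f x) (at x)" for x
      using b by (auto intro!: derivative_eq_intros simp: field_simps)
    show "((\<lambda>x. - exp (- x / b) / 2) \<longlongrightarrow> 0) at_top"
      using tendsto_minus[OF tendsto_divide_zero[OF tendsto_exp_neg_div_at_top[OF b], of 2]] by simp
  qed (use b in auto)
  also have "0 - (- exp (- a / b) / 2) = exp (- a / b) / 2"
    by simp
  finally show ?thesis .
qed

lemma emeasure_Lap_abs_greater:
  assumes b: "b > 0" and a: "a \<ge> 0"
  shows "emeasure (Lap b) {x. a < \<bar>x\<bar>} = ennreal (exp (- a / b))"
proof -
  have split: "{x. a < \<bar>x\<bar>} = {a<..} \<union> uminus ` {a<..}"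
    by (auto simp: abs_if image_iff intro: exI[of _ "- _"])
  have "emeasure (Lap b) {x. a < \<bar>x\<bar>} = emeasure (Lap b) {a<..} + emeasure (Lap b) (uminus ` {a<..})"
    unfolding split by (rule plus_emeasure[symmetric]) (use a in auto)
  also have "\<dots> = ennreal (exp (- a / b) / 2) + ennreal (exp (- a / b) / 2)"
    by (subst emeasure_Lap_uminus) (simp_all add: emeasure_Lap_greaterThan[OF b a])
  also have "\<dots> = ennreal (exp (- a / b))"
    by (simp flip: ennreal_plus)
  finally show ?thesis .
qed

lemma prob_space_Lap:
  assumes b: "b > 0"
  shows "prob_space (Lap b)"
proof
  have "AE x in Lap b. x \<in> space (Lap b) \<longleftrightarrow> x \<in> {x. 0 < \<bar>x\<bar>}"
    unfolding Lap_def by (simp add: AE_density) (rule AE_mp[OF AE_lborel_singleton[of 0]], simp)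
  then have "emeasure (Lap b) (space (Lap b)) = emeasure (Lap b) {x. 0 < \<bar>x\<bar>}"
    by (intro emeasure_eq_AE) auto
  also have "\<dots> = ennreal (exp (- 0 / b))"
    by (rule emeasure_Lap_abs_greater[OF b order_refl])
  finally show "emeasure (Lap b) (space (Lap b)) = 1"
    by simp
qed

lemma measure_Lap_abs_greater:
  "b > 0 \<Longrightarrow> a \<ge> 0 \<Longrightarrow> measure (Lap b) {x. a < \<bar>x\<bar>} = exp (- a / b)"
  by (simp add: measure_def emeasure_Lap_abs_greater)

lemma paths_length_le_card:
  assumes "graph Vs Es" and "p \<in> paths Vs Es s t"
  shows "length p \<le> card Vs"
proof -
  have "length p = card (set p)"
    using assms(2) by (simp add: paths_def distinct_card)
  also have "\<dots> \<le> card Vs"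
    using assms by (intro card_mono) (auto simp: graph_def paths_def)
  finally show ?thesis .
qed

lemma finite_paths:
  assumes "graph Vs Es"
  shows "finite (paths Vs Es s t)"
proof (rule finite_subset)
  show "paths Vs Es s t \<subseteq> {p. set p \<subseteq> Vs \<and> length p \<le> card Vs}"
    using paths_length_le_card[OF assms] by (auto simp: paths_def)
  show "finite {p. set p \<subseteq> Vs \<and> length p \<le> card Vs}"
    using assms by (intro finite_lists_length_le) (auto simp: graph_def)
qed

lemma graph_finite_edges:
  assumes "graph Vs Es"
  shows "finite Es"
proof (rule finite_subset)
  show "Es \<subseteq> Pow Vs"
    using assms by (fastforce simp: graph_def)
  show "finite (Pow Vs)"
    using assms by (simp add: graph_def)
qed

lemma dist_w_attained:
  assumes "graph Vs Es" and "paths Vs Es s t \<noteq> {}"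
  obtains Q where "Q \<in> paths Vs Es s t" and "path_weight w Q = dist_w Vs Es w s t"
proof -
  have "dist_w Vs Es w s t \<in> path_weight w ` paths Vs Es s t"
    unfolding dist_w_def using assms finite_paths[OF assms(1)] by (intro Min_in) auto
  then show ?thesis
    using that by auto
qed

lemma paths_edge_in:
  "p \<in> paths Vs Es s t \<Longrightarrow> i < length p - 1 \<Longrightarrow> {p ! i, p ! (i + 1)} \<in> Es"
  by (simp add: paths_def)

lemma path_weight_mono:
  assumes "p \<in> paths Vs Es s t" and "\<forall>e\<in>Es. w e \<le> w' e"
  shows "path_weight w p \<le> path_weight w' p"
  unfolding path_weight_def using assms by (intro sum_mono) (auto dest: paths_edge_in)

lemma path_weight_le_add:
  assumes "graph Vs Es" and "p \<in> paths Vs Es s t" and "\<forall>e\<in>Es. w' e \<le> w e + \<delta>" and "\<delta> \<ge> 0"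
  shows "path_weight w' p \<le> path_weight w p + real (card Vs) * \<delta>"
proof -
  have "path_weight w' p \<le> (\<Sum>i<length p - 1. w {p ! i, p ! (i + 1)} + \<delta>)"
    unfolding path_weight_def using assms(2,3) by (intro sum_mono) (auto dest: paths_edge_in)
  also have "\<dots> = path_weight w p + real (length p - 1) * \<delta>"
    by (simp add: path_weight_def sum.distrib)
  also have "\<dots> \<le> path_weight w p + real (card Vs) * \<delta>"
    using paths_length_le_card[OF assms(1,2)] assms(4) by (intro add_left_mono mult_right_mono) auto
  finally show ?thesis .
qed

lemma min_path_error_le:
  assumes "graph Vs Es" and "paths Vs Es s t \<noteq> {}" and "is_min_path Vs Es w' s t P"
    and "\<forall>e\<in>Es. w e \<le> w' e \<and> w' e \<le> w e + \<delta>" and "\<delta> \<ge> 0"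
  shows "path_weight w P - dist_w Vs Es w s t \<le> real (card Vs) * \<delta>"
proof -
  obtain Q where Q: "Q \<in> paths Vs Es s t" and dQ: "path_weight w Q = dist_w Vs Es w s t"
    using dist_w_attained[OF assms(1,2)] .
  have P: "P \<in> paths Vs Es s t"
    using assms(3) by (simp add: is_min_path_def)
  have "path_weight w P \<le> path_weight w' P"
    using path_weight_mono[OF P] assms(4) by blast
  also have "\<dots> \<le> path_weight w' Q"
    using assms(3) Q by (simp add: is_min_path_def)
  also have "\<dots> \<le> path_weight w Q + real (card Vs) * \<delta>"
    using path_weight_le_add[OF assms(1) Q _ assms(5)] assms(4) by blast
  finally show ?thesis
    using dQ by simp
qed

lemma min_path_error_le_shifted_noise:
  assumes "graph Vs Es" and "paths Vs Es s t \<noteq> {}"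
    and "is_min_path Vs Es (\<lambda>e. w e + X e + c) s t P"
    and "\<forall>e\<in>Es. \<bar>X e\<bar> \<le> c" and "c \<ge> 0"
  shows "path_weight w P - dist_w Vs Es w s t \<le> 2 * real (card Vs) * c"
proof -
  have "\<forall>e\<in>Es. w e \<le> w e + X e + c \<and> w e + X e + c \<le> w e + 2 * c"
    using assms(4) by auto
  from min_path_error_le[OF assms(1-3) this] show ?thesis
    using assms(5) by simp
qed

lemma measure_PiM_all_components_notin_ge:
  assumes "prob_space M" and "finite I" and "A \<in> sets M"
  shows "measure (PiM I (\<lambda>_. M)) {X \<in> space (PiM I (\<lambda>_. M)). \<forall>i\<in>I. X i \<notin> A}
           \<ge> 1 - real (card I) * measure M A"
proof -
  interpret product_prob_space "\<lambda>_. M" I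
    using assms(1) by (rule product_prob_spaceI)
  let ?Hit = "\<lambda>i. {X \<in> space (PiM I (\<lambda>_. M)). X i \<in> A}"
  have Hit: "?Hit i \<in> sets (PiM I (\<lambda>_. M))" if "i \<in> I" for i
    using that assms(3) by auto
  have "P.prob (\<Union>i\<in>I. ?Hit i) \<le> (\<Sum>i\<in>I. P.prob (?Hit i))"
    using assms(2) Hit by (intro P.finite_measure_subadditive_finite) auto
  also have "\<dots> = real (card I) * measure M A"
    using assms(3) by (simp add: measure_def emeasure_PiM_Collect_single)
  finally have "1 - real (card I) * measure M A \<le> P.prob (space (PiM I (\<lambda>_. M)) - (\<Union>i\<in>I. ?Hit i))"
    using assms(2) Hit by (subst P.prob_compl) auto
  also have "space (PiM I (\<lambda>_. M)) - (\<Union>i\<in>I. ?Hit i) = {X \<in> space (PiM I (\<lambda>_. M)). \<forall>i\<in>I. X i \<notin> A}"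
    by auto
  finally show ?thesis .
qed

lemma ln_nat_div_nonneg:
  assumes "0 < \<gamma>" and "\<gamma> < 1"
  shows "0 \<le> ln (real n / \<gamma>)"
proof (cases "n = 0")
  case False
  then have "1 \<le> real n / \<gamma>"
    using assms by (simp add: field_simps)
  then show ?thesis
    by simp
qed simp

lemma measure_PiM_Lap_all_abs_le:
  assumes "finite I" and b: "b > 0" and \<gamma>: "0 < \<gamma>" "\<gamma> < 1"
  shows "measure (PiM I (\<lambda>_. Lap b))
      {X \<in> space (PiM I (\<lambda>_. Lap b)). \<forall>i\<in>I. \<bar>X i\<bar> \<le> b * ln (real (card I) / \<gamma>)} \<ge> 1 - \<gamma>"
proof -
  define c where "c = b * ln (real (card I) / \<gamma>)"
  have c: "0 \<le> c"
    using b ln_nat_div_nonneg[OF \<gamma>] by (simp add: c_def)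
  have "real (card I) * exp (- c / b) \<le> \<gamma>"
  proof (cases "card I = 0")
    case False
    then have "exp (- c / b) = \<gamma> / real (card I)"
      using b \<gamma>(1) by (simp add: c_def exp_minus)
    then show ?thesis
      using False by simp
  qed (use \<gamma> in simp)
  then have "1 - \<gamma> \<le> 1 - real (card I) * measure (Lap b) {x. c < \<bar>x\<bar>}"
    by (simp add: measure_Lap_abs_greater[OF b c])
  also have "\<dots> \<le> measure (PiM I (\<lambda>_. Lap b))
      {X \<in> space (PiM I (\<lambda>_. Lap b)). \<forall>i\<in>I. X i \<notin> {x. c < \<bar>x\<bar>}}"
    using prob_space_Lap[OF b] assms(1) by (rule measure_PiM_all_components_notin_ge) simp
  finally show ?thesis
    by (simp add: c_def not_less)
qed

lemma borel_measurable_path_weight_PiM: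
  assumes "sets M = sets borel" and "p \<in> paths Vs Es s t"
  shows "(\<lambda>X. path_weight (\<lambda>e. w e + X e + c) p) \<in> borel_measurable (PiM Es (\<lambda>_. M))"
  unfolding path_weight_def
proof (rule borel_measurable_sum)
  fix i assume "i \<in> {..<length p - 1}"
  then have "{p ! i, p ! (i + 1)} \<in> Es"
    using assms(2) by (auto dest: paths_edge_in)
  then have "(\<lambda>X. X {p ! i, p ! (i + 1)}) \<in> measurable (PiM Es (\<lambda>_. M)) M"
    by (rule measurable_component_singleton)
  then have "(\<lambda>X. X {p ! i, p ! (i + 1)}) \<in> borel_measurable (PiM Es (\<lambda>_. M))"
    unfolding measurable_cong_sets[OF refl assms(1)] .
  then show "(\<lambda>X. w {p ! i, p ! (i + 1)} + X {p ! i, p ! (i + 1)} + c) \<in> borel_measurable (PiM Es (\<lambda>_. M))"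
    by measurable
qed

lemma min_path_error_event_in_sets:
  assumes "graph Vs Es" and "sets M = sets borel"
  shows "{X \<in> space (PiM Es (\<lambda>_. M)). \<forall>s\<in>Vs. \<forall>t\<in>Vs. \<forall>P. paths Vs Es s t \<noteq> {} \<longrightarrow>
            is_min_path Vs Es (\<lambda>e. w e + X e + c) s t P \<longrightarrow> path_weight w P - dist_w Vs Es w s t \<le> r}
         \<in> sets (PiM Es (\<lambda>_. M))" (is "?E \<in> _")
proof -
  let ?pw = "\<lambda>X. path_weight (\<lambda>e. w e + X e + c)"
  have "?E = {X \<in> space (PiM Es (\<lambda>_. M)). \<forall>s\<in>Vs. \<forall>t\<in>Vs. \<forall>P\<in>paths Vs Es s t.
            (\<forall>Q\<in>paths Vs Es s t. ?pw X P \<le> ?pw X Q) \<longrightarrow> path_weight w P - dist_w Vs Es w s t \<le> r}"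
    by (auto simp: is_min_path_def)
  also have "\<dots> \<in> sets (PiM Es (\<lambda>_. M))"
  proof (intro sets.sets_Collect_finite_All sets.sets_Collect_imp sets.sets_Collect_const)
    fix s t P Q assume P: "P \<in> paths Vs Es s t" and Q: "Q \<in> paths Vs Es s t"
    show "{X \<in> space (PiM Es (\<lambda>_. M)). ?pw X P \<le> ?pw X Q} \<in> sets (PiM Es (\<lambda>_. M))"
      by (rule borel_measurable_le[OF borel_measurable_path_weight_PiM[OF assms(2) P]
            borel_measurable_path_weight_PiM[OF assms(2) Q]])
  qed (use assms(1) finite_paths[OF assms(1)] in \<open>auto simp: graph_def\<close>)
  finally show ?thesis .
qed

theorem corollary5p6:
  fixes Vs :: "'v set" and Es :: "'v set set" and w :: "'v set \<Rightarrow> real"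
    and \<epsilon> \<gamma> :: real
  assumes "graph Vs Es"
    and "\<epsilon> > 0" and "0 < \<gamma>" and "\<gamma> < 1"
    and "\<forall>e\<in>Es. w e > 0"
  shows "prob_space.prob (PiM Es (\<lambda>_. Lap (1 / \<epsilon>)))
     {X \<in> space (PiM Es (\<lambda>_. Lap (1 / \<epsilon>))).
        \<forall>s\<in>Vs. \<forall>t\<in>Vs. \<forall>P. paths Vs Es s t \<noteq> {} \<longrightarrow>
          is_min_path Vs Es (\<lambda>e. w e + X e + (1 / \<epsilon>) * ln (real (card Es) / \<gamma>)) s t P \<longrightarrow>
          path_weight w P - dist_w Vs Es w s t
            \<le> (2 * real (card Vs) / \<epsilon>) * ln (real (card Es) / \<gamma>)}
     \<ge> 1 - \<gamma>" (is "measure ?M ?E \<ge> _")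
proof -
  let ?c = "(1 / \<epsilon>) * ln (real (card Es) / \<gamma>)"
  let ?Good = "{X \<in> space ?M. \<forall>e\<in>Es. \<bar>X e\<bar> \<le> ?c}"
  interpret prob_space ?M
    using assms(2) by (intro prob_space_PiM prob_space_Lap) simp
  have c: "0 \<le> ?c"
    using assms(2) ln_nat_div_nonneg[OF assms(3,4)] by simp
  have "1 - \<gamma> \<le> prob ?Good"
    using measure_PiM_Lap_all_abs_le[OF graph_finite_edges[OF assms(1)] _ assms(3,4), of "1 / \<epsilon>"] assms(2)
    by simp
  also have "prob ?Good \<le> prob ?E"
  proof (rule finite_measure_mono)
    show "?Good \<subseteq> ?E"
      using min_path_error_le_shifted_noise[OF assms(1) _ _ _ c] by (fastforce simp: algebra_simps)
    show "?E \<in> sets ?M"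
      using assms(1) by (rule min_path_error_event_in_sets) simp
  qed
  finally show ?thesis .
qed

end
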